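(* Let $\phi:\mathbb{R}^{d}\to\mathbb{R}^{d}$ be a $C^{2}$ diffeomorphism, $x_{1}\in\mathbb{R}^{d}$ and $x_{j}=\phi^{j-1}(x_{1})$. If $x_{1},\ldots,x_{D-1}$ are distinct, then the $(D-1)\times D_{\alpha}$ matrix $V(x_{1})$ (defined in the context) has rank $D-1$, i.e. rank equal to its number of rows.
   Context: $\pi_{1}$ is the first coordinate projection, $\mathbf{e}_{1}=(1,0,\ldots,0)$. For a multi-index $\alpha\in\mathbb{Z}_{\geq0}^{d}$, $p_{\alpha}(x)=\prod_i(\pi_{i}x)^{\alpha_{i}}$; $\mathcal{I}_{2D-1}$ is the set of multi-indices with $|\alpha|=\sum_i\alpha_i\leq2D-1$, of cardinality $D_{\alpha}$. For $c=(c_{\alpha})\in\mathbb{R}^{D_{\alpha}}$ let $\phi_{c}(x)=\phi(x)+\mathbf{e}_{1}\sum_{\alpha\in\mathcal{I}_{2D-1}}c_{\alpha}p_{\alpha}(x)$. The matrix $V(x_{1})$ has rows $j=1,\ldots,D-1$ equal to the gradient with respect to $c$ at $c=0$ of $c\mapsto\pi_{1}\phi_{c}^{j}(x_{1})$; equivalently, with $F_{c}(x_{1})=(\pi_{1}x_{1},\pi_{1}\phi_{c}(x_{1}),\ldots,\pi_{1}\phi_{c}^{D-1}(x_{1}))$, one has $F_{c}(x_{1})=F_{0}(x_{1})+\binom{0}{V(x_{1})}c+O(\|c\|^{2})$. *)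

theory Defs
  imports "HOL-Analysis.Analysis"
begin

text \<open>First coordinate projection and first standard basis vector of R^d;
  the index type carries a well-order, its least element is "coordinate 1".\<close>
definition idx1 :: "'d::{finite,wellorder}" where "idx1 = (LEAST i. True)"

definition pi1 :: "(real,'d::{finite,wellorder}) vec \<Rightarrow> real" where "pi1 x = x $ idx1"

definition e1 :: "(real,'d::{finite,wellorder}) vec" where "e1 = axis idx1 1"

definition pmon :: "('d::finite \<Rightarrow> nat) \<Rightarrow> (real,'d) vec \<Rightarrow> real" where
  "pmon \<alpha> x = (\<Prod>i\<in>UNIV. (x $ i) ^ (\<alpha> i))"

definition multi_idx :: "nat \<Rightarrow> ('d::finite \<Rightarrow> nat) set" where
  "multi_idx n = {\<alpha>. (\<Sum>i\<in>UNIV. \<alpha> i) \<le> n}"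

definition phi_c :: "nat \<Rightarrow> ((real,'d::{finite,wellorder}) vec \<Rightarrow> (real,'d) vec) \<Rightarrow> (('d::{finite,wellorder} \<Rightarrow> nat) \<Rightarrow> real)
    \<Rightarrow> (real,'d::{finite,wellorder}) vec \<Rightarrow> (real,'d::{finite,wellorder}) vec" where
  "phi_c D \<phi> c x = \<phi> x + (\<Sum>\<alpha>\<in>multi_idx (2*D-1). c \<alpha> * pmon \<alpha> x) *\<^sub>R e1"

definition Vmat :: "nat \<Rightarrow> ((real,'d::{finite,wellorder}) vec \<Rightarrow> (real,'d) vec) \<Rightarrow> (real,'d::{finite,wellorder}) vec \<Rightarrow> nat
    \<Rightarrow> ('d::{finite,wellorder} \<Rightarrow> nat) \<Rightarrow> real" where
  "Vmat D \<phi> x1 j \<alpha> =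
     deriv (\<lambda>t. pi1 ((phi_c D \<phi> (\<lambda>\<beta>. if \<beta> = \<alpha> then t else 0) ^^ j) x1)) 0"

definition rows_indep :: "('r \<Rightarrow> 'c \<Rightarrow> real) \<Rightarrow> 'r set \<Rightarrow> 'c set \<Rightarrow> bool" where
  "rows_indep M S C \<longleftrightarrow>
     (\<forall>a. (\<forall>k\<in>C. (\<Sum>j\<in>S. a j * M j k) = 0) \<longrightarrow> (\<forall>j\<in>S. a j = 0))"

definition mat_rank :: "('r \<Rightarrow> 'c \<Rightarrow> real) \<Rightarrow> 'r set \<Rightarrow> 'c set \<Rightarrow> nat" where
  "mat_rank M R C = Max {card S | S. S \<subseteq> R \<and> rows_indep M S C}"

definition C2 :: "((real,'d::finite) vec \<Rightarrow> (real,'d) vec) \<Rightarrow> bool" where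
  "C2 f \<longleftrightarrow> (\<exists>Df D2f. (\<forall>x. (f has_derivative blinfun_apply (Df x)) (at x)) \<and>
                      (\<forall>x. (Df has_derivative blinfun_apply (D2f x)) (at x)) \<and>
                      continuous_on UNIV D2f)"

definition C2_diffeo :: "((real,'d::finite) vec \<Rightarrow> (real,'d) vec) \<Rightarrow> bool" where
  "C2_diffeo f \<longleftrightarrow> bij f \<and> C2 f \<and> C2 (inv f)"

end

theory Submission
  imports Defs
begin

text \<open>Differentiating the iterates of \<open>\<phi>\<^sub>c\<close> along the orbit \<open>x\<^sub>i = \<phi>\<^sup>i\<^sup>-\<^sup>1(x\<^sub>1)\<close> factors
  \<open>V(x\<^sub>1) = L Q\<close>: the entry \<open>L\<^sub>j\<^sub>i\<close> is the first coordinate of the response at time \<open>j\<close> of the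
  linearised dynamics to a kick \<open>e\<^sub>1\<close> at time \<open>i < j\<close>, so \<open>L\<close> is lower triangular with unit
  diagonal, and \<open>Q\<^sub>i\<^sub>\<alpha> = p\<^sub>\<alpha>(x\<^sub>i)\<close>. The rows of \<open>Q\<close> are independent because \<open>D - 1\<close> distinct points
  are separated by polynomials of degree \<open>D - 2\<close>: for each point a product of \<open>D - 2\<close> coordinate
  differences vanishes at all other points but not at that one.\<close>

lemma rows_indepD:
  assumes "rows_indep M S C" and "\<And>k. k \<in> C \<Longrightarrow> (\<Sum>j\<in>S. a j * M j k) = 0" and "j \<in> S"
  shows "a j = 0"
  using assms unfolding rows_indep_def by blast

lemma rows_indep_mult:
  assumes L: "rows_indep L S K" and Q: "rows_indep Q K C"
    and M: "\<And>j k. j \<in> S \<Longrightarrow> k \<in> C \<Longrightarrow> M j k = (\<Sum>i\<in>K. L j i * Q i k)"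
  shows "rows_indep M S C"
  unfolding rows_indep_def
proof (intro allI impI ballI)
  fix a j assume a: "\<forall>k\<in>C. (\<Sum>j\<in>S. a j * M j k) = 0" and "j \<in> S"
  have LQ: "(\<Sum>i\<in>K. (\<Sum>j\<in>S. a j * L j i) * Q i k) = 0" if "k \<in> C" for k
  proof -
    have "(\<Sum>i\<in>K. (\<Sum>j\<in>S. a j * L j i) * Q i k) = (\<Sum>i\<in>K. \<Sum>j\<in>S. a j * (L j i * Q i k))"
      by (simp add: sum_distrib_right mult.assoc)
    also have "\<dots> = (\<Sum>j\<in>S. a j * M j k)"
      using that by (subst sum.swap) (simp add: M sum_distrib_left)
    finally show ?thesis using a that by simp
  qed
  have "(\<Sum>j\<in>S. a j * L j i) = 0" if "i \<in> K" for i
    using rows_indepD[where a="\<lambda>i. \<Sum>j\<in>S. a j * L j i", OF Q LQ that] .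
  then show "a j = 0"
    by (rule rows_indepD[OF L _ \<open>j \<in> S\<close>])
qed

lemma rows_indep_unitriangular:
  fixes N :: nat
  assumes diag: "\<And>j. j \<in> {1..N} \<Longrightarrow> L j (j - 1) = 1"
    and upper: "\<And>j i. j \<in> {1..N} \<Longrightarrow> j \<le> i \<Longrightarrow> L j i = 0"
  shows "rows_indep L {1..N} {..<N}"
  unfolding rows_indep_def
proof (intro allI impI, rule ccontr)
  fix a assume a: "\<forall>i\<in>{..<N}. (\<Sum>j\<in>{1..N}. a j * L j i) = 0"
    and "\<not> (\<forall>j\<in>{1..N}. a j = 0)"
  then have nonzero: "{j \<in> {1..N}. a j \<noteq> 0} \<noteq> {}" by blast
  define m where "m = Max {j \<in> {1..N}. a j \<noteq> 0}"
  have m: "m \<in> {1..N}" "a m \<noteq> 0"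
    using Max_in[OF _ nonzero] unfolding m_def by auto
  have above: "a j = 0" if "j \<in> {1..N}" "m < j" for j
  proof (rule ccontr)
    assume "a j \<noteq> 0"
    then have "j \<le> m" unfolding m_def using that by (intro Max_ge) auto
    then show False using that by simp
  qed
  have "(\<Sum>j\<in>{1..N}. a j * L j (m - 1)) = (\<Sum>j\<in>{m}. a j * L j (m - 1))"
  proof (rule sum.mono_neutral_right)
    show "\<forall>j\<in>{1..N} - {m}. a j * L j (m - 1) = 0"
    proof
      fix j assume j: "j \<in> {1..N} - {m}"
      show "a j * L j (m - 1) = 0"
      proof (cases "j < m")
        case True
        then show ?thesis using upper[of j "m - 1"] j by simp
      next
        case False
        then show ?thesis using above[of j] j by simp
      qed
    qed
  qed (use m in auto)
  also have "\<dots> = a m" using diag m(1) by simp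
  finally show False using a m by auto
qed

lemma mat_rank_eq_card:
  assumes "finite R" and "rows_indep M R C"
  shows "mat_rank M R C = card R"
  unfolding mat_rank_def
proof (rule Max_eqI)
  show "finite {card S |S. S \<subseteq> R \<and> rows_indep M S C}"
    by (rule finite_subset[of _ "card ` Pow R"]) (use assms(1) in auto)
qed (use assms card_mono in auto)

lemma finite_multi_idx: "finite (multi_idx n :: ('d::finite \<Rightarrow> nat) set)"
proof (rule finite_subset)
  show "multi_idx n \<subseteq> Pi\<^sub>E (UNIV::'d set) (\<lambda>_. {..n})"
  proof
    fix \<alpha> :: "'d \<Rightarrow> nat" assume "\<alpha> \<in> multi_idx n"
    then have "\<alpha> i \<le> n" for i
      using member_le_sum[of i UNIV \<alpha>] by (simp add: multi_idx_def)
    then show "\<alpha> \<in> Pi\<^sub>E UNIV (\<lambda>_. {..n})" by (simp add: PiE_iff)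
  qed
qed (simp add: finite_PiE)

lemma multi_idx_mono: "m \<le> n \<Longrightarrow> multi_idx m \<subseteq> multi_idx n"
  unfolding multi_idx_def by auto

lemma zero_in_multi_idx: "(\<lambda>_. 0) \<in> multi_idx m"
  by (simp add: multi_idx_def)

lemma pmon_zero [simp]: "pmon (\<lambda>_. 0) x = 1"
  by (simp add: pmon_def)

lemma pmon_fun_upd_Suc: "pmon (\<alpha>(c := Suc (\<alpha> c))) x = x $ c * pmon \<alpha> x"
proof -
  have "pmon (\<alpha>(c := Suc (\<alpha> c))) x = (x $ c) ^ Suc (\<alpha> c) * (\<Prod>i\<in>UNIV - {c}. (x $ i) ^ \<alpha> i)"
    unfolding pmon_def by (subst prod.remove[of _ c]) (auto intro!: prod.cong)
  also have "\<dots> = x $ c * pmon \<alpha> x"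
    unfolding pmon_def by (subst (2) prod.remove[of _ c]) auto
  finally show ?thesis .
qed

lemma fun_upd_Suc_in_multi_idx:
  assumes "\<alpha> \<in> multi_idx m"
  shows "\<alpha>(c := Suc (\<alpha> c)) \<in> multi_idx (Suc m)"
proof -
  have "(\<Sum>i\<in>UNIV. (\<alpha>(c := Suc (\<alpha> c))) i) = (\<Sum>i\<in>UNIV. \<alpha> i + (if i = c then 1 else 0))"
    by (rule sum.cong) auto
  also have "\<dots> = Suc (\<Sum>i\<in>UNIV. \<alpha> i)"
    by (simp add: sum.distrib)
  finally show ?thesis using assms by (simp add: multi_idx_def)
qed

lemma monomial_moments_mult_coordinate:
  fixes P :: "'i \<Rightarrow> (real,'d::finite) vec"
  assumes "\<forall>\<alpha>\<in>multi_idx (Suc m). (\<Sum>i\<in>S. u i * pmon \<alpha> (P i)) = 0"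
  shows "\<forall>\<alpha>\<in>multi_idx m. (\<Sum>i\<in>S. u i * (P i $ c - r) * pmon \<alpha> (P i)) = 0"
proof
  fix \<alpha> :: "'d \<Rightarrow> nat" assume \<alpha>: "\<alpha> \<in> multi_idx m"
  have "(\<Sum>i\<in>S. u i * (P i $ c - r) * pmon \<alpha> (P i))
      = (\<Sum>i\<in>S. u i * pmon (\<alpha>(c := Suc (\<alpha> c))) (P i)) - r * (\<Sum>i\<in>S. u i * pmon \<alpha> (P i))"
    by (simp add: pmon_fun_upd_Suc sum_distrib_left sum_subtractf[symmetric] algebra_simps)
  also have "\<dots> = 0"
    using assms fun_upd_Suc_in_multi_idx[OF \<alpha>] multi_idx_mono[of m "Suc m"] \<alpha> by auto
  finally show "(\<Sum>i\<in>S. u i * (P i $ c - r) * pmon \<alpha> (P i)) = 0" .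
qed

lemma monomial_moments_mult_prod:
  fixes P :: "'i \<Rightarrow> (real,'d::finite) vec"
  assumes "finite F" and "\<forall>\<alpha>\<in>multi_idx (m + card F). (\<Sum>i\<in>S. u i * pmon \<alpha> (P i)) = 0"
  shows "\<forall>\<alpha>\<in>multi_idx m. (\<Sum>i\<in>S. u i * (\<Prod>j\<in>F. P i $ c j - r j) * pmon \<alpha> (P i)) = 0"
  using assms
proof (induction F arbitrary: m rule: finite_induct)
  case (insert x F)
  then have "\<forall>\<alpha>\<in>multi_idx (Suc m). (\<Sum>i\<in>S. u i * (\<Prod>j\<in>F. P i $ c j - r j) * pmon \<alpha> (P i)) = 0"
    using insert.IH[of "Suc m"] by simp
  then show ?case
    using monomial_moments_mult_coordinate[where u="\<lambda>i. u i * (\<Prod>j\<in>F. P i $ c j - r j)"] insert(1,2)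
    by (simp add: ac_simps)
qed simp

lemma rows_indep_monomials:
  fixes P :: "'i \<Rightarrow> (real,'d::finite) vec"
  assumes S: "finite S" and inj: "inj_on P S" and card: "card S \<le> Suc m"
  shows "rows_indep (\<lambda>i \<alpha>. pmon \<alpha> (P i)) S (multi_idx m)"
  unfolding rows_indep_def
proof (intro allI impI ballI)
  fix u k
  assume moments: "\<forall>\<alpha>\<in>multi_idx m. (\<Sum>i\<in>S. u i * pmon \<alpha> (P i)) = 0" and k: "k \<in> S"
  define F where "F = S - {k}"
  have "\<forall>j\<in>F. \<exists>c. P k $ c \<noteq> P j $ c"
    using inj k unfolding F_def inj_on_def by (auto simp: vec_eq_iff)
  then obtain c where c: "\<And>j. j \<in> F \<Longrightarrow> P k $ c j \<noteq> P j $ c j" by metis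
  have "card F \<le> m" using card k S unfolding F_def by simp
  then have "\<forall>\<alpha>\<in>multi_idx (0 + card F). (\<Sum>i\<in>S. u i * pmon \<alpha> (P i)) = 0"
    using moments multi_idx_mono by auto
  from monomial_moments_mult_prod[OF _ this, of c "\<lambda>j. P j $ c j"] S
  have "0 = (\<Sum>i\<in>S. u i * (\<Prod>j\<in>F. P i $ c j - P j $ c j))"
    using zero_in_multi_idx unfolding F_def by fastforce
  also have "\<dots> = (\<Sum>i\<in>{k}. u i * (\<Prod>j\<in>F. P i $ c j - P j $ c j))"
  proof (rule sum.mono_neutral_right)
    show "\<forall>i\<in>S - {k}. u i * (\<Prod>j\<in>F. P i $ c j - P j $ c j) = 0"
      using S unfolding F_def by (auto intro!: prod_zero)
  qed (use S k in auto)
  finally have "u k * (\<Prod>j\<in>F. P k $ c j - P j $ c j) = 0" by simp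
  moreover have "(\<Prod>j\<in>F. P k $ c j - P j $ c j) \<noteq> 0"
    using S c unfolding F_def by simp
  ultimately show "u k = 0" by simp
qed

fun impulse_response :: "(nat \<Rightarrow> 'a::real_normed_vector \<Rightarrow>\<^sub>L 'a) \<Rightarrow> 'a \<Rightarrow> nat \<Rightarrow> nat \<Rightarrow> 'a" where
  "impulse_response A e 0 i = 0"
| "impulse_response A e (Suc j) i = (if i = j then e else A j (impulse_response A e j i))"

lemma has_derivative_perturbed_iterate:
  fixes \<phi> :: "'a::real_normed_vector \<Rightarrow> 'a" and g :: "'a \<Rightarrow> real"
  assumes d\<phi>: "\<And>x. (\<phi> has_derivative blinfun_apply (Df x)) (at x)"
    and g: "continuous_on UNIV g"
  shows "((\<lambda>t. ((\<lambda>x. \<phi> x + (t * g x) *\<^sub>R e) ^^ j) x0) has_derivative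
     (\<lambda>h. h *\<^sub>R (\<Sum>i<j. g ((\<phi>^^i) x0) *\<^sub>R impulse_response (\<lambda>k. Df ((\<phi>^^k) x0)) e j i))) (at 0)"
proof (induction j)
  case (Suc j)
  define A where "A = (\<lambda>k. Df ((\<phi>^^k) x0))"
  define y where "y = (\<lambda>t. ((\<lambda>x. \<phi> x + (t * g x) *\<^sub>R e) ^^ j) x0)"
  define v where "v = (\<Sum>i<j. g ((\<phi>^^i) x0) *\<^sub>R impulse_response A e j i)"
  have y0: "y 0 = (\<phi>^^j) x0" unfolding y_def by simp
  have dy: "(y has_derivative (\<lambda>h. h *\<^sub>R v)) (at 0)"
    using Suc.IH unfolding y_def v_def A_def .
  have d_flow: "((\<lambda>t. \<phi> (y t)) has_derivative (\<lambda>h. A j (h *\<^sub>R v))) (at 0)"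
    using diff_chain_at[OF dy d\<phi>[of "y 0"]] y0 unfolding A_def by (simp add: o_def)
  have "isCont (\<lambda>t. g (y t)) 0"
    using g by (intro isCont_o2[OF has_derivative_continuous[OF dy]]) (simp add: continuous_on_eq_continuous_at)
  then have "DERIV (\<lambda>t. t * g (y t)) 0 :> g (y 0)"
    unfolding CARAT_DERIV by (intro exI[of _ "\<lambda>t. g (y t)"]) auto
  from bounded_linear.has_derivative[OF bounded_linear_scaleR_left this[unfolded has_field_derivative_def]]
  have d_kick: "((\<lambda>t. (t * g (y t)) *\<^sub>R e) has_derivative (\<lambda>h. (g (y 0) * h) *\<^sub>R e)) (at 0)" .
  have "(\<Sum>i<Suc j. g ((\<phi>^^i) x0) *\<^sub>R impulse_response A e (Suc j) i)
      = (\<Sum>i<j. g ((\<phi>^^i) x0) *\<^sub>R A j (impulse_response A e j i)) + g ((\<phi>^^j) x0) *\<^sub>R e"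
    by (auto simp add: sum.lessThan_Suc intro!: sum.cong)
  also have "\<dots> = A j v + g (y 0) *\<^sub>R e"
    unfolding v_def y0 by (simp add: blinfun.sum_right blinfun.scaleR_right)
  finally have "(\<lambda>h. A j (h *\<^sub>R v) + (g (y 0) * h) *\<^sub>R e)
      = (\<lambda>h. h *\<^sub>R (\<Sum>i<Suc j. g ((\<phi>^^i) x0) *\<^sub>R impulse_response A e (Suc j) i))"
    by (simp add: blinfun.scaleR_right scaleR_add_right mult.commute)
  with has_derivative_add[OF d_flow d_kick] show ?case
    unfolding y_def A_def by simp
qed simp

lemma phi_c_single_coeff:
  assumes "\<alpha> \<in> multi_idx (2*D-1)"
  shows "phi_c D \<phi> (\<lambda>\<beta>. if \<beta> = \<alpha> then t else 0) = (\<lambda>x. \<phi> x + (t * pmon \<alpha> x) *\<^sub>R e1)"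
proof -
  have "(\<Sum>\<beta>\<in>multi_idx (2*D-1). (if \<beta> = \<alpha> then t else 0) * pmon \<beta> x) = t * pmon \<alpha> x" for x
    using assms by (simp add: if_distrib[where f="\<lambda>c. c * _"] finite_multi_idx cong: if_cong)
  then show ?thesis unfolding phi_c_def by simp
qed

lemma pi1_e1 [simp]: "pi1 e1 = 1"
  by (simp add: pi1_def e1_def axis_def)

lemma Vmat_eq_sum_impulse_response:
  fixes \<phi> :: "(real,'d::{finite,wellorder}) vec \<Rightarrow> (real,'d) vec"
  assumes d\<phi>: "\<And>x. (\<phi> has_derivative blinfun_apply (Df x)) (at x)"
    and \<alpha>: "\<alpha> \<in> multi_idx (2*D-1)"
  shows "Vmat D \<phi> x1 j \<alpha>
    = (\<Sum>i<j. pmon \<alpha> ((\<phi>^^i) x1) * pi1 (impulse_response (\<lambda>k. Df ((\<phi>^^k) x1)) e1 j i))"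
proof -
  define v where "v = (\<Sum>i<j. pmon \<alpha> ((\<phi>^^i) x1) *\<^sub>R impulse_response (\<lambda>k. Df ((\<phi>^^k) x1)) e1 j i)"
  have pmon: "continuous_on UNIV (pmon \<alpha>)"
    unfolding pmon_def by (intro continuous_intros)
  have "((\<lambda>t. pi1 (((\<lambda>x. \<phi> x + (t * pmon \<alpha> x) *\<^sub>R e1) ^^ j) x1)) has_derivative (\<lambda>h. pi1 (h *\<^sub>R v))) (at 0)"
    unfolding pi1_def v_def
    by (rule bounded_linear.has_derivative[OF bounded_linear_vec_nth has_derivative_perturbed_iterate[OF d\<phi> pmon]])
  moreover have "(\<lambda>h. pi1 (h *\<^sub>R v)) = (*) (pi1 v)"
    by (auto simp: pi1_def)
  ultimately have "DERIV (\<lambda>t. pi1 (((\<lambda>x. \<phi> x + (t * pmon \<alpha> x) *\<^sub>R e1) ^^ j) x1)) 0 :> pi1 v"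
    unfolding has_field_derivative_def by simp
  then have "Vmat D \<phi> x1 j \<alpha> = pi1 v"
    unfolding Vmat_def phi_c_single_coeff[OF \<alpha>] by (rule DERIV_imp_deriv)
  then show ?thesis
    unfolding v_def pi1_def by simp
qed

theorem lemma10:
  fixes \<phi> :: "(real,'d::{finite,wellorder}) vec \<Rightarrow> (real,'d) vec" and x1 :: "(real,'d) vec" and D :: nat
  assumes "C2_diffeo \<phi>"
    and "inj_on (\<lambda>j. (\<phi> ^^ (j - 1)) x1) {1..D-1}"
  shows "mat_rank (Vmat D \<phi> x1) {1..D-1} (multi_idx (2*D-1)) = D - 1"
proof -
  obtain Df where d\<phi>: "\<And>x. (\<phi> has_derivative blinfun_apply (Df x)) (at x)"
    using assms(1) unfolding C2_diffeo_def C2_def by blast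
  define N where "N = D - 1"
  define orbit where "orbit = (\<lambda>i. (\<phi> ^^ i) x1)"
  define L where "L j i = (if i < j then pi1 (impulse_response (\<lambda>k. Df (orbit k)) e1 j i) else 0)"
    for j i
  have "inj_on ((\<lambda>j. (\<phi> ^^ (j - 1)) x1) \<circ> Suc) {..<N}"
    using assms(2) by (intro comp_inj_on) (auto simp: N_def lessThan_atLeast0 atLeastLessThanSuc_atLeastAtMost)
  then have "inj_on orbit {..<N}"
    by (simp add: orbit_def o_def)
  then have Q: "rows_indep (\<lambda>i \<alpha>. pmon \<alpha> (orbit i)) {..<N} (multi_idx (2*D-1))"
    by (rule rows_indep_monomials[OF finite_lessThan]) (auto simp: N_def)
  have L: "rows_indep L {1..N} {..<N}"
    by (rule rows_indep_unitriangular) (auto simp: L_def dest!: Suc_le_D)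
  have "Vmat D \<phi> x1 j \<alpha> = (\<Sum>i<N. L j i * pmon \<alpha> (orbit i))"
    if "j \<in> {1..N}" "\<alpha> \<in> multi_idx (2*D-1)" for j \<alpha>
  proof -
    have "(\<Sum>i<N. L j i * pmon \<alpha> (orbit i)) = (\<Sum>i<j. L j i * pmon \<alpha> (orbit i))"
      using that(1) by (intro sum.mono_neutral_right) (auto simp: L_def)
    then show ?thesis
      using Vmat_eq_sum_impulse_response[OF d\<phi> that(2)] by (simp add: L_def orbit_def mult.commute)
  qed
  with L Q have "rows_indep (Vmat D \<phi> x1) {1..N} (multi_idx (2*D-1))"
    by (rule rows_indep_mult)
  then show ?thesis
    unfolding N_def by (subst mat_rank_eq_card) auto
qed

end
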